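(* The undirected graph $G^*_u$ defined in the context is perfect.
   Context: Consider the three-receiver unicast index coding problem with 12 messages indexed by $[12]$, where receiver $u_i$ demands the messages indexed by $W_i$ and knows those indexed by $K_i$: $W_1=\{1,2,3,4\}$, $W_2=\{5,6,7,8\}$, $W_3=\{9,10,11,12\}$, $K_1=\{5,6,9,10\}$, $K_2=\{1,2,9,11\}$, $K_3=\{1,3,5,7\}$. $G^*$ is the directed graph on vertex set $[12]$ with a directed edge $(a,b)$ iff $b\in K_i$, where $i$ is the unique index with $a\in W_i$. $G^*_u$ is the undirected graph on $[12]$ in which $\{a,b\}$ is an edge iff both $(a,b)$ and $(b,a)$ are edges of $G^*$. An undirected graph is perfect if for every induced subgraph $H$, the independence number of $H$ equals its clique cover number. *)

theory Defs
  imports Main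
begin

definition W :: "nat \<Rightarrow> nat set" where
  "W i = (if i = 1 then {1,2,3,4} else if i = 2 then {5,6,7,8}
          else if i = 3 then {9,10,11,12} else {})"

definition K :: "nat \<Rightarrow> nat set" where
  "K i = (if i = 1 then {5,6,9,10} else if i = 2 then {1,2,9,11}
          else if i = 3 then {1,3,5,7} else {})"

definition Gstar_edge :: "nat \<Rightarrow> nat \<Rightarrow> bool" where
  "Gstar_edge a b \<longleftrightarrow> a \<in> {1..12} \<and> b \<in> {1..12} \<and>
     (\<exists>i\<in>{1,2,3}. a \<in> W i \<and> b \<in> K i)"

definition Gu_edge :: "nat \<Rightarrow> nat \<Rightarrow> bool" where
  "Gu_edge a b \<longleftrightarrow> Gstar_edge a b \<and> Gstar_edge b a"

definition Gu_vertices :: "nat set" where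
  "Gu_vertices = {1..12}"

definition indep_set :: "('a \<Rightarrow> 'a \<Rightarrow> bool) \<Rightarrow> 'a set \<Rightarrow> 'a set \<Rightarrow> bool" where
  "indep_set E S T \<longleftrightarrow> T \<subseteq> S \<and> (\<forall>x\<in>T. \<forall>y\<in>T. x \<noteq> y \<longrightarrow> \<not> E x y)"

definition is_clique :: "('a \<Rightarrow> 'a \<Rightarrow> bool) \<Rightarrow> 'a set \<Rightarrow> bool" where
  "is_clique E C \<longleftrightarrow> (\<forall>x\<in>C. \<forall>y\<in>C. x \<noteq> y \<longrightarrow> E x y)"

definition independence_number :: "('a \<Rightarrow> 'a \<Rightarrow> bool) \<Rightarrow> 'a set \<Rightarrow> nat" where
  "independence_number E S = Max {card T | T. indep_set E S T}"

definition clique_cover :: "('a \<Rightarrow> 'a \<Rightarrow> bool) \<Rightarrow> 'a set \<Rightarrow> 'a set set \<Rightarrow> bool" where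
  "clique_cover E S P \<longleftrightarrow> finite P \<and> (\<forall>C\<in>P. C \<subseteq> S \<and> is_clique E C) \<and> \<Union>P = S"

definition clique_cover_number :: "('a \<Rightarrow> 'a \<Rightarrow> bool) \<Rightarrow> 'a set \<Rightarrow> nat" where
  "clique_cover_number E S = (LEAST n. \<exists>P. clique_cover E S P \<and> card P = n)"

definition perfect :: "'a set \<Rightarrow> ('a \<Rightarrow> 'a \<Rightarrow> bool) \<Rightarrow> bool" where
  "perfect V E \<longleftrightarrow> (\<forall>S\<subseteq>V. independence_number E S = clique_cover_number E S)"

end

theory Submission
  imports Defs
begin

text \<open>
  \<open>G\<^sup>*\<^sub>u\<close> consists of the three 4-cycles 1-5-2-6, 1-9-3-10 and 5-9-7-11, each containing
  one edge of the triangle 1-5-9, together with the isolated vertices 4, 8 and 12.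
  Every nonempty induced subgraph contains a clique \<open>C\<close> such that each independent set
  avoiding \<open>C\<close> can be enlarged by a vertex of \<open>C\<close>: the edge \<open>{2,6}\<close>, \<open>{3,10}\<close> or \<open>{7,11}\<close>
  of a 4-cycle lying completely in the subgraph, or else the closed neighbourhood of a
  simplicial vertex. Deleting \<open>C\<close> lowers the clique cover number by at most one and the
  independence number by at least one, so \<open>\<alpha> = \<theta>\<close> follows by induction from \<open>\<alpha> \<le> \<theta>\<close>.
\<close>

lemma finite_card_indep_sets:
  assumes "finite S"
  shows "finite {card T | T. indep_set E S T}"
proof -
  have "{card T | T. indep_set E S T} \<subseteq> card ` Pow S"
    by (auto simp: indep_set_def)
  then show ?thesis
    using assms finite_subset by blast
qed

lemma card_le_independence_number:
  assumes "finite S" "indep_set E S T"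
  shows "card T \<le> independence_number E S"
  unfolding independence_number_def
  using finite_card_indep_sets[OF assms(1)] assms(2) by (auto intro: Max_ge)

lemma maximum_indep_set_exists:
  assumes "finite S"
  obtains T where "indep_set E S T" "card T = independence_number E S"
proof -
  have "{card T | T. indep_set E S T} \<noteq> {}"
    by (auto simp: indep_set_def)
  then have "independence_number E S \<in> {card T | T. indep_set E S T}"
    unfolding independence_number_def using Max_in finite_card_indep_sets[OF assms] by blast
  then show ?thesis
    using that by auto
qed

lemma clique_cover_number_le:
  assumes "clique_cover E S P"
  shows "clique_cover_number E S \<le> card P"
  unfolding clique_cover_number_def using assms by (auto intro: Least_le)

lemma minimum_clique_cover_exists:
  assumes "finite S"
  obtains P where "clique_cover E S P" "card P = clique_cover_number E S"
proof -
  have "clique_cover E S ((\<lambda>x. {x}) ` S)"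
    using assms by (auto simp: clique_cover_def is_clique_def)
  then have "\<exists>P. clique_cover E S P \<and> card P = clique_cover_number E S"
    unfolding clique_cover_number_def
    by (intro LeastI[where P = "\<lambda>n. \<exists>P. clique_cover E S P \<and> card P = n"]) blast
  then show ?thesis
    using that by blast
qed

lemma card_indep_set_le_card_clique_cover:
  assumes T: "indep_set E S T" and P: "clique_cover E S P"
  shows "card T \<le> card P"
proof -
  have "\<exists>C. C \<in> P \<and> x \<in> C" if "x \<in> T" for x
    using that T P by (auto simp: indep_set_def clique_cover_def)
  then obtain f where f: "\<And>x. x \<in> T \<Longrightarrow> f x \<in> P \<and> x \<in> f x"
    by metis
  have "inj_on f T"
  proof (rule inj_onI)
    fix x y
    assume "x \<in> T" "y \<in> T" "f x = f y"
    then have "x \<in> f x" "y \<in> f x" "is_clique E (f x)"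
      using f P by (auto simp: clique_cover_def)
    with \<open>x \<in> T\<close> \<open>y \<in> T\<close> show "x = y"
      using T unfolding is_clique_def indep_set_def by blast
  qed
  moreover have "f ` T \<subseteq> P" "finite P"
    using f P by (auto simp: clique_cover_def)
  ultimately show ?thesis
    by (intro card_inj_on_le)
qed

lemma independence_number_le_clique_cover_number:
  assumes "finite S"
  shows "independence_number E S \<le> clique_cover_number E S"
  by (metis assms maximum_indep_set_exists minimum_clique_cover_exists
      card_indep_set_le_card_clique_cover)

definition augmenting_clique :: "('a \<Rightarrow> 'a \<Rightarrow> bool) \<Rightarrow> 'a set \<Rightarrow> 'a set \<Rightarrow> bool" where
  "augmenting_clique E S C \<longleftrightarrow> C \<subseteq> S \<and> C \<noteq> {} \<and> is_clique E C \<and>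
     (\<forall>T. indep_set E (S - C) T \<longrightarrow> (\<exists>c\<in>C. \<forall>t\<in>T. \<not> E c t))"

lemma independence_number_eq_clique_cover_number_remove:
  assumes fin: "finite S" and sym: "symp E" and C: "augmenting_clique E S C"
    and eq: "independence_number E (S - C) = clique_cover_number E (S - C)"
  shows "independence_number E S = clique_cover_number E S"
proof -
  have fin_rest: "finite (S - C)"
    using fin by simp
  obtain T where T: "indep_set E (S - C) T" "card T = independence_number E (S - C)"
    using fin_rest by (rule maximum_indep_set_exists)
  obtain c where c: "c \<in> C" "\<forall>t\<in>T. \<not> E c t"
    using C T(1) unfolding augmenting_clique_def by blast
  have "indep_set E S (insert c T)"
    using T(1) c C sym by (auto simp: indep_set_def augmenting_clique_def symp_def)
  moreover have "c \<notin> T" "finite T"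
    using T(1) c(1) fin by (auto simp: indep_set_def intro: finite_subset)
  ultimately have alpha: "independence_number E (S - C) + 1 \<le> independence_number E S"
    using card_le_independence_number[OF fin] T(2) by fastforce
  obtain P where P: "clique_cover E (S - C) P" "card P = clique_cover_number E (S - C)"
    using fin_rest by (rule minimum_clique_cover_exists)
  have "clique_cover E S (insert C P)"
    using P(1) C by (auto simp: clique_cover_def augmenting_clique_def)
  then have "clique_cover_number E S \<le> card (insert C P)"
    by (rule clique_cover_number_le)
  also have "\<dots> \<le> card P + 1"
    using P(1) by (simp add: clique_cover_def card_insert_if)
  finally show ?thesis
    using alpha eq P(2) independence_number_le_clique_cover_number[OF fin, of E] by linarith
qed

lemma perfectI_augmenting_clique:
  assumes "finite V" "symp E"
    and aug: "\<And>S. S \<subseteq> V \<Longrightarrow> S \<noteq> {} \<Longrightarrow> \<exists>C. augmenting_clique E S C"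
  shows "perfect V E"
  unfolding perfect_def
proof (intro allI impI)
  fix S
  assume "S \<subseteq> V"
  with finite_subset[OF this assms(1)] show "independence_number E S = clique_cover_number E S"
  proof (induction S rule: finite_psubset_induct)
    case (psubset S)
    show ?case
    proof (cases "S = {}")
      case True
      have "clique_cover E {} {}"
        by (simp add: clique_cover_def)
      then show ?thesis
        using True clique_cover_number_le independence_number_le_clique_cover_number
        by (metis card.empty finite.emptyI le_zero_eq)
    next
      case False
      then obtain C where C: "augmenting_clique E S C"
        using aug psubset.prems by blast
      then have "S - C \<subset> S"
        by (auto simp: augmenting_clique_def)
      then have "independence_number E (S - C) = clique_cover_number E (S - C)"
        using psubset.IH psubset.prems by blast
      then show ?thesis
        by (rule independence_number_eq_clique_cover_number_remove[OF psubset.hyps assms(2) C])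
    qed
  qed
qed

lemma augmenting_clique_simplicial:
  assumes "symp E" "v \<in> S" "{a \<in> S. E v a} \<subseteq> X" "is_clique E (insert v X)"
  shows "augmenting_clique E S (insert v {a \<in> S. E v a})"
  using assms by (auto simp: augmenting_clique_def is_clique_def indep_set_def)

text \<open>An independent set cannot contain both \<open>x\<close> and \<open>y\<close>, so \<open>u\<close> or \<open>w\<close> can be added to it.\<close>

lemma augmenting_clique_edge:
  assumes sym: "symp E" and "u \<in> S" "w \<in> S" "E u w"
    and nbrs_u: "\<And>a. E u a \<Longrightarrow> a = w \<or> a = x"
    and nbrs_w: "\<And>a. E w a \<Longrightarrow> a = u \<or> a = y"
    and "E x y" "x \<noteq> y"
  shows "augmenting_clique E S {u, w}"
  unfolding augmenting_clique_def
proof (intro conjI allI impI)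
  show "is_clique E {u, w}"
    using \<open>E u w\<close> sym by (auto simp: is_clique_def symp_def)
  fix T
  assume T: "indep_set E (S - {u, w}) T"
  show "\<exists>c\<in>{u, w}. \<forall>t\<in>T. \<not> E c t"
  proof (cases "x \<in> T")
    case True
    then have "y \<notin> T"
      using T \<open>E x y\<close> \<open>x \<noteq> y\<close> by (auto simp: indep_set_def)
    then show ?thesis
      using T nbrs_w by (auto simp: indep_set_def)
  next
    case False
    then show ?thesis
      using T nbrs_u by (auto simp: indep_set_def)
  qed
qed (use \<open>u \<in> S\<close> \<open>w \<in> S\<close> in auto)

lemma Gstar_edge_iff:
  "Gstar_edge a b \<longleftrightarrow>
     a \<in> {1,2,3,4} \<and> b \<in> {5,6,9,10} \<or> a \<in> {5,6,7,8} \<and> b \<in> {1,2,9,11} \<or>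
     a \<in> {9,10,11,12} \<and> b \<in> {1,3,5,7}"
  unfolding Gstar_edge_def W_def K_def by auto

lemma Gu_edge_iff:
  "Gu_edge a b \<longleftrightarrow>
     a \<in> {1,2} \<and> b \<in> {5,6} \<or> a \<in> {5,6} \<and> b \<in> {1,2} \<or>
     a \<in> {1,3} \<and> b \<in> {9,10} \<or> a \<in> {9,10} \<and> b \<in> {1,3} \<or>
     a \<in> {5,7} \<and> b \<in> {9,11} \<or> a \<in> {9,11} \<and> b \<in> {5,7}"
  unfolding Gu_edge_def Gstar_edge_iff insert_iff empty_iff by presburger

lemma symp_Gu_edge: "symp Gu_edge"
  by (auto simp: symp_def Gu_edge_def)

lemma Gu_edge_augmenting_clique:
  assumes "S \<noteq> {}"
  shows "\<exists>C. augmenting_clique Gu_edge S C"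
proof -
  have edge: "augmenting_clique Gu_edge S {u, w}"
    if "u \<in> S" "w \<in> S" "Gu_edge u w" "\<And>a. Gu_edge u a \<Longrightarrow> a = w \<or> a = x"
      "\<And>a. Gu_edge w a \<Longrightarrow> a = u \<or> a = y" "Gu_edge x y" "x \<noteq> y" for u w x y
    using augmenting_clique_edge[OF symp_Gu_edge] that by blast
  have simplicial: "\<exists>C. augmenting_clique Gu_edge S C"
    if "v \<in> S" "{a \<in> S. Gu_edge v a} \<subseteq> X" "is_clique Gu_edge (insert v X)" for v X
    using augmenting_clique_simplicial[OF symp_Gu_edge] that by blast
  consider "2 \<in> S" "6 \<in> S" | "3 \<in> S" "10 \<in> S" | "7 \<in> S" "11 \<in> S"
    | "2 \<in> S" "6 \<notin> S" | "6 \<in> S" "2 \<notin> S" | "3 \<in> S" "10 \<notin> S" | "10 \<in> S" "3 \<notin> S"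
    | "7 \<in> S" "11 \<notin> S" | "11 \<in> S" "7 \<notin> S" | "S \<inter> {2,3,6,7,10,11} = {}"
    by blast
  then show ?thesis
  proof cases
    case 1
    then show ?thesis
      using edge[of 2 6 5 1] by (auto simp: Gu_edge_iff)
  next
    case 2
    then show ?thesis
      using edge[of 3 10 9 1] by (auto simp: Gu_edge_iff)
  next
    case 3
    then show ?thesis
      using edge[of 7 11 9 5] by (auto simp: Gu_edge_iff)
  next
    case 4
    then show ?thesis
      using simplicial[of 2 "{5}"] by (auto simp: Gu_edge_iff is_clique_def)
  next
    case 5
    then show ?thesis
      using simplicial[of 6 "{1}"] by (auto simp: Gu_edge_iff is_clique_def)
  next
    case 6
    then show ?thesis
      using simplicial[of 3 "{9}"] by (auto simp: Gu_edge_iff is_clique_def)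
  next
    case 7
    then show ?thesis
      using simplicial[of 10 "{1}"] by (auto simp: Gu_edge_iff is_clique_def)
  next
    case 8
    then show ?thesis
      using simplicial[of 7 "{9}"] by (auto simp: Gu_edge_iff is_clique_def)
  next
    case 9
    then show ?thesis
      using simplicial[of 11 "{5}"] by (auto simp: Gu_edge_iff is_clique_def)
  next
    case 10
    obtain v where "v \<in> S"
      using assms by blast
    then show ?thesis
      using 10 simplicial[of v "{1,5,9}"] simplicial[of v "{}"]
      by (cases "v \<in> {1,5,9}") (auto simp: Gu_edge_iff is_clique_def)
  qed
qed

theorem theorem3:
  shows "perfect Gu_vertices Gu_edge"
  unfolding Gu_vertices_def
  using symp_Gu_edge Gu_edge_augmenting_clique by (intro perfectI_augmenting_clique) auto

end
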